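(* Let $K\ge 2$ be a power of two. $K$-way LCP-mergesort, as described in the context, sorts any set $\mathcal S$ of $n$ strings and computes its LCP array $H$ using fewer than $L(H) + n\lceil\log_K n\rceil\log_2 K + n + \lceil\frac{n-1}{K-1}\rceil$ character comparisons, and runs in $O(D+n\log n)$ time.
   Context: Strings are zero-terminated finite sequences over a totally ordered alphabet, ordered lexicographically; $\mathrm{lcp}(s,t)$ is the length of their longest common prefix. For a sorted sequence $s_1\le\dots\le s_n$ its LCP array is $H=(\bot,h_2,\dots,h_n)$, $h_i=\mathrm{lcp}(s_{i-1},s_i)$, and $L(H)=\sum_{i\ge 2}h_i$. The distinguishing prefix size $D$ is the sum over all $s\in\mathcal S$ of the length of the shortest prefix of $s$ that is not a prefix of any other string of $\mathcal S$ ($D\ge L(H)$). $K$-way LCP-merge is the procedure merging $K$ sorted sequences with LCP arrays via an LCP-aware tournament tree: $K$ calls of LCP-Compare to build the tree and $\log_2 K$ calls per output string to replay the leaf-to-root path of the previous winner, where LCP-Compare on $(a,s_a,h_a),(b,s_b,h_b)$ with $h_a=\mathrm{lcp}(p,s_a)$, $h_b=\mathrm{lcp}(p,s_b)$, $p\le s_a,s_b$ decides by the LCPs when $h_a\ne h_b$ (the string with larger LCP is smaller; resulting lcp is $\min(h_a,h_b)$) and otherwise compares characters from position $h_a+1$ on until a mismatch or terminator; it returns the smaller index with its LCP, and the larger index with $\mathrm{lcp}(s_a,s_b)$. Counting convention: each character comparison yielding equality counts one; the final mismatch test counts one; the LCP-only cases count zero. $K$-way LCP-mergesort: a set of size at most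 1 is returned with trivial LCP array; otherwise the input is split into $K$ parts of nearly equal size (some possibly empty when $n<K$), each part is sorted recursively together with its LCP array, and the $K$ results are combined by one $K$-way LCP-merge (used at every level, including when $n<K$). *)

theory Defs
  imports Complex_Main "HOL-Library.Sublist"
begin

text \<open>A string is a finite list over a linearly ordered alphabet; the zero terminator is
implicit (it is smaller than every character). Hence the order on strings is the
lexicographic order in which a proper prefix is smaller: lexordp_eq (non-strict) and
lexordp (strict).\<close>

definition lcp :: "'a list \<Rightarrow> 'a list \<Rightarrow> nat" where
  "lcp s t = length (longest_common_prefix s t)"

text \<open>Zero-terminated version of a string (None plays the terminator).\<close>
definition zt :: "'a list \<Rightarrow> 'a option list" where
  "zt s = map Some s @ [None]"

definition dist_prefix_len :: "'a list set \<Rightarrow> 'a list \<Rightarrow> nat" where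
  "dist_prefix_len S s = (LEAST m. \<forall>t\<in>S. t \<noteq> s \<longrightarrow> \<not> prefix (take m (zt s)) (zt t))"

definition dist_prefix_size :: "'a list set \<Rightarrow> nat" where
  "dist_prefix_size S = (\<Sum>s\<in>S. dist_prefix_len S s)"

text \<open>A sorted sequence with its LCP array, represented as a list of pairs
(s_i, h_i); the first LCP entry is the undefined entry (bottom) and is ignored.\<close>
definition lcp_array_ok :: "('a list \<times> nat) list \<Rightarrow> bool" where
  "lcp_array_ok out = (\<forall>i. 0 < i \<and> i < length out \<longrightarrow>
      snd (out ! i) = lcp (fst (out ! (i - 1))) (fst (out ! i)))"

definition L_H :: "('a list \<times> nat) list \<Rightarrow> nat" where
  "L_H out = sum_list (map snd (drop 1 out))"

definition sorts_with_lcp :: "'a::linorder list set \<Rightarrow> ('a list \<times> nat) list \<Rightarrow> bool" where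
  "sorts_with_lcp S out = (set (map fst out) = S \<and> sorted_wrt ord_class.lexordp (map fst out)
      \<and> lcp_array_ok out)"

text \<open>A candidate is Some (stream index, string, lcp w.r.t. the last output string p),
or None for an exhausted stream (sentinel, larger than everything, compared without
character comparisons).\<close>
type_synonym 'a cand = "(nat \<times> 'a list \<times> nat) option"

text \<open>Returns (winner = smaller, loser = larger with its lcp to the winner,
number of character comparisons).\<close>
fun lcp_compare :: "'a::linorder cand \<Rightarrow> 'a cand \<Rightarrow> 'a cand \<times> 'a cand \<times> nat" where
  "lcp_compare None y = (y, None, 0)"
| "lcp_compare x None = (x, None, 0)"
| "lcp_compare (Some (a, sa, ha)) (Some (b, sb, hb)) =
     (if ha > hb then (Some (a, sa, ha), Some (b, sb, hb), 0)
      else if ha < hb then (Some (b, sb, hb), Some (a, sa, ha), 0)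
      else (let l = lcp sa sb in
            if ord_class.lexordp_eq sa sb then (Some (a, sa, ha), Some (b, sb, l), l - ha + 1)
            else (Some (b, sb, hb), Some (a, sa, l), l - ha + 1)))"

datatype 'a ltree = LLeaf nat | LNode "'a ltree" "'a cand" "'a ltree"

text \<open>Build the tree over the leaves lo ..< lo + 2^d; returns (tree storing losers,
overall winner, character comparisons).\<close>
fun build :: "(nat \<Rightarrow> 'a::linorder cand) \<Rightarrow> nat \<Rightarrow> nat \<Rightarrow> 'a ltree \<times> 'a cand \<times> nat" where
  "build c lo 0 = (LLeaf lo, c lo, 0)"
| "build c lo (Suc d) =
     (let (l, wl, cl) = build c lo d;
          (r, wr, cr) = build c (lo + 2 ^ d) d;
          (w, los, cc) = lcp_compare wl wr
      in (LNode l los r, w, cl + cr + cc))"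

fun replay :: "'a::linorder cand \<Rightarrow> nat \<Rightarrow> nat \<Rightarrow> nat \<Rightarrow> 'a ltree \<Rightarrow> 'a ltree \<times> 'a cand \<times> nat" where
  "replay x i lo (Suc d) (LNode l los r) =
     (if i < lo + 2 ^ d then
        (let (l', w, c) = replay x i lo d l; (w', los', c') = lcp_compare w los
         in (LNode l' los' r, w', c + c'))
      else
        (let (r', w, c) = replay x i (lo + 2 ^ d) d r; (w', los', c') = lcp_compare los w
         in (LNode l los' r', w', c + c')))"
| "replay x i lo _ t = (t, x, 0)"

text \<open>Main loop: output the winner, advance its stream, replay. Returns (output,
character comparisons, number of elementary operations). The first argument is fuel
(the total number of strings).\<close>
fun mloop :: "nat \<Rightarrow> nat \<Rightarrow> ('a::linorder list \<times> nat) list list \<Rightarrow> 'a ltree \<Rightarrow> 'a cand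
    \<Rightarrow> ('a list \<times> nat) list \<times> nat \<times> nat" where
  "mloop 0 d ss t w = ([], 0, 0)"
| "mloop (Suc f) d ss t w =
     (case w of None \<Rightarrow> ([], 0, 0)
      | Some (i, s, h) \<Rightarrow>
         (let (x, ss') = (case ss ! i of [] \<Rightarrow> (None, ss)
                                     | (s', h') # r \<Rightarrow> (Some (i, s', h'), ss[i := r]));
              (t', w', c) = replay x i 0 d t;
              (out, c2, ops) = mloop f d ss' t' w'
          in ((s, h) # out, c + c2, d + 1 + ops)))"

text \<open>K-way LCP-merge with K = 2^d input sequences (given with their LCP arrays; the
first LCP entry of each sequence is ignored and replaced by 0 = lcp with the empty
string).\<close>
definition kmerge :: "nat \<Rightarrow> ('a::linorder list \<times> nat) list list
    \<Rightarrow> ('a list \<times> nat) list \<times> nat \<times> nat" where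
  "kmerge d ss =
     (let heads = (\<lambda>i. if i < length ss then (case ss ! i of [] \<Rightarrow> None
                                                | (s, _) # _ \<Rightarrow> Some (i, s, 0)) else None);
          (t, w, c0) = build heads 0 d;
          (out, c, ops) = mloop (sum_list (map length ss)) d (map tl ss) t w
      in (out, c0 + c, (2 ^ d - 1) + ops))"

definition psize :: "nat \<Rightarrow> nat \<Rightarrow> nat \<Rightarrow> nat" where
  "psize K n j = n div K + (if j < n mod K then 1 else 0)"

definition pstart :: "nat \<Rightarrow> nat \<Rightarrow> nat \<Rightarrow> nat" where
  "pstart K n j = j * (n div K) + min j (n mod K)"

definition split_parts :: "nat \<Rightarrow> 'a list \<Rightarrow> 'a list list" where
  "split_parts K xs =
     map (\<lambda>j. take (psize K (length xs) j) (drop (pstart K (length xs) j) xs)) [0..<K]"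

lemma psize_less:
  assumes "K \<ge> 2" "n \<ge> 2" shows "psize K n j < n"
proof (cases "j < n mod K")
  case True
  then have r: "n mod K \<ge> 1" by simp
  have n: "n = K * (n div K) + n mod K" by simp
  show ?thesis
  proof (cases "n div K = 0")
    case True
    then have "n mod K = n" using n by simp
    then show ?thesis using True \<open>j < n mod K\<close> assms unfolding psize_def by simp
  next
    case False
    have "n div K + 1 \<le> 2 * (n div K)" using False by simp
    also have "\<dots> \<le> K * (n div K)" using assms by simp
    finally have "n div K + 1 \<le> K * (n div K)" .
    then have "n div K + 1 < K * (n div K) + n mod K" using r by linarith
    then show ?thesis using n \<open>j < n mod K\<close> unfolding psize_def by simp
  qed
next
  case False
  have "n div K \<le> n div 2" using assms by (simp add: div_le_mono2)
  also have "\<dots> < n" using assms by simp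
  finally show ?thesis using False unfolding psize_def by simp
qed

lemma split_parts_shorter:
  assumes "K \<ge> 2" "length xs \<ge> 2" "p \<in> set (split_parts K xs)"
  shows "length p < length xs"
  using assms psize_less[OF assms(1,2)] unfolding split_parts_def
  by (auto simp: min_def) (metis le_less_trans psize_less[OF assms(1,2)])

text \<open>Returns (sorted sequence
with LCP array, number of character comparisons, number of other elementary operations:
one per call, one per element for splitting, one per LCP-Compare call, one per output).\<close>
function msort :: "nat \<Rightarrow> 'a::linorder list list \<Rightarrow> ('a list \<times> nat) list \<times> nat \<times> nat" where
  "msort d xs =
     (if length xs \<le> 1 \<or> d = 0 then (map (\<lambda>s. (s, 0)) xs, 0, 1)
      else
        (let rs = map (msort d) (split_parts (2 ^ d) xs);
             (out, c, ops) = kmerge d (map fst rs)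
         in (out, sum_list (map (fst \<circ> snd) rs) + c,
             1 + length xs + sum_list (map (snd \<circ> snd) rs) + ops)))"
  by pat_completeness auto
termination
proof (relation "measure (\<lambda>(d, xs). length xs)")
  show "wf (measure (\<lambda>(d, xs). length xs))" by simp
next
  fix d :: nat and xs :: "'a list list" and p
  assume a: "\<not> (length xs \<le> 1 \<or> d = 0)" "p \<in> set (split_parts (2 ^ d) xs)"
  have "(2::nat) \<le> 2 ^ d" using a(1) by (simp add: self_le_power)
  then have "length p < length xs" using split_parts_shorter a by force
  then show "((d, p), (d, xs)) \<in> measure (\<lambda>(d, xs). length xs)" by simp
qed

definition msort_comparisons :: "nat \<Rightarrow> 'a::linorder list list \<Rightarrow> nat" where
  "msort_comparisons d xs = fst (snd (msort d xs))"

definition msort_time :: "nat \<Rightarrow> 'a::linorder list list \<Rightarrow> nat" where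
  "msort_time d xs = fst (snd (msort d xs)) + snd (snd (msort d xs))"

end

theory Submission
  imports Defs
begin

(*
  The comparison bound is an amortised analysis of LCP-Compare.  While
  merging, every candidate string carries its LCP with the last output string p, and every
  loser stored in the tournament tree carries its LCP with the winner that beat it.  An
  LCP-Compare then costs at most one mismatch test plus the increase of the sum of these
  LCPs, because every equal character it reads raises the LCP of the loser by one.

  Summing over the merge loop, one K-way merge
  (K = 2^d) of n strings costs at most L(H_out) - Sum_j L(H_j) + d*n + #nonempty inputs - 1
  comparisons.  Unrolling the recursion of mergesort over a depth k with n <= K^k gives
  c + 1 <= L(H) + d*n*k + n and at most (d + K + 2)*n*k + 1 other operations; choosing
  k = ceil(log_K n) resp. k = ceil(log_2 n) and L(H) <= D yields the theorem.
*)

lemma lcp_simps[simp]: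
  "lcp [] ys = 0" "lcp xs [] = 0"
  "lcp (x#xs) (y#ys) = (if x = y then Suc (lcp xs ys) else 0)"
  by (auto simp: lcp_def)

lemma lcp_sym: "lcp a b = lcp b a"
  by (induction a b rule: list_induct2') auto

lemma lcp_le_length: "lcp a b \<le> length a"
  by (induction a b rule: list_induct2') auto

lemma take_lcp: "m \<le> lcp a b \<Longrightarrow> take m a = take m b"
  by (induction a b arbitrary: m rule: list_induct2') (auto simp: take_Cons' split: if_splits)

text \<open>The ultrametric inequality of lcp: two strings share every prefix they both share
with a third one.\<close>
lemma lcp_min_le: "min (lcp p a) (lcp p b) \<le> lcp a b"
proof (induction p arbitrary: a b)
  case Nil then show ?case by simp
next
  case (Cons x p)
  show ?case by (cases a; cases b; auto simp: Cons)
qed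

text \<open>The LCP-only case of LCP-Compare: if both strings are at least p and a agrees with p
longer than b does, then a is smaller than b and lcp a b is the smaller of the two LCPs.\<close>
lemma lcp_decides_order:
  fixes p a b :: "'a::linorder list"
  assumes "ord_class.lexordp_eq p b" "lcp p b < lcp p a"
  shows "ord_class.lexordp a b \<and> lcp a b = lcp p b"
  using assms
proof (induction p arbitrary: a b)
  case Nil then show ?case by simp
next
  case (Cons x p)
  then obtain a' where a: "a = x # a'" by (cases a) (auto split: if_splits)
  from Cons obtain y b' where b: "b = y # b'" by (cases b) auto
  show ?case using Cons a b by (cases "y = x") auto
qed

text \<open>lcp_chain p r: the strings of r are strictly increasing, all larger than p, and every
LCP entry is the LCP with the predecessor (p for the first entry). lcp_chain_from p r allows
the first string of r to be equal to p; every merge output satisfies lcp_chain_from with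
p = [].\<close>
fun lcp_chain :: "'a::linorder list \<Rightarrow> ('a list \<times> nat) list \<Rightarrow> bool" where
  "lcp_chain p [] = True"
| "lcp_chain p ((s,h)#r) = (h = lcp p s \<and> ord_class.lexordp p s \<and> lcp_chain s r)"

fun lcp_chain_from :: "'a::linorder list \<Rightarrow> ('a list \<times> nat) list \<Rightarrow> bool" where
  "lcp_chain_from p [] = True"
| "lcp_chain_from p ((s,h)#r) = (h = lcp p s \<and> ord_class.lexordp_eq p s \<and> lcp_chain s r)"

lemma lcp_chain_less: "lcp_chain p r \<Longrightarrow> x \<in> fst ` set r \<Longrightarrow> ord_class.lexordp p x"
proof (induction r arbitrary: p)
  case Nil then show ?case by simp
next
  case (Cons a r)
  obtain s h where a: "a = (s,h)" by (cases a)
  show ?case using Cons a by (auto intro: lexordp_trans)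
qed

lemma lcp_chain_from_strict:
  "lcp_chain_from s out \<Longrightarrow> (\<forall>x\<in>fst ` set out. x \<noteq> s) \<Longrightarrow> lcp_chain s out"
  by (cases out) (auto simp: lexordp_eq_conv_lexord)

lemma lcp_chain_sorted: "lcp_chain s r \<Longrightarrow> sorted_wrt ord_class.lexordp (s # map fst r)"
proof (induction r arbitrary: s)
  case Nil then show ?case by simp
next
  case (Cons a r)
  obtain t h where a: "a = (t, h)" by (cases a)
  have "\<forall>y\<in>set (map fst r). ord_class.lexordp t y" using Cons.prems a lcp_chain_less[of t r] by auto
  then show ?case using Cons a by (auto intro: lexordp_trans)
qed

lemma lcp_array_ok_Cons2: "lcp_array_ok (x # y # r) = (snd y = lcp (fst x) (fst y) \<and> lcp_array_ok (y # r))"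
  unfolding lcp_array_ok_def
proof (intro iffI conjI allI impI)
  assume A: "\<forall>i. 0 < i \<and> i < length (x # y # r) \<longrightarrow>
      snd ((x # y # r) ! i) = lcp (fst ((x # y # r) ! (i - 1))) (fst ((x # y # r) ! i))"
  show "snd y = lcp (fst x) (fst y)" using A[rule_format, of 1] by simp
  fix i assume i: "0 < i \<and> i < length (y # r)"
  then show "snd ((y # r) ! i) = lcp (fst ((y # r) ! (i - 1))) (fst ((y # r) ! i))"
    using A[rule_format, of "Suc i"] by (cases i) auto
next
  fix i assume B: "snd y = lcp (fst x) (fst y) \<and> (\<forall>i. 0 < i \<and> i < length (y # r) \<longrightarrow>
      snd ((y # r) ! i) = lcp (fst ((y # r) ! (i - 1))) (fst ((y # r) ! i)))"
    and i: "0 < i \<and> i < length (x # y # r)"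
  show "snd ((x # y # r) ! i) = lcp (fst ((x # y # r) ! (i - 1))) (fst ((x # y # r) ! i))"
  proof (cases "i = 1")
    case True then show ?thesis using B by simp
  next
    case False
    then obtain i' where i': "i = Suc i'" "0 < i'" using i by (cases i) auto
    then show ?thesis using B[THEN conjunct2, rule_format, of i'] i by (cases i') auto
  qed
qed

lemma lcp_chain_lcp_array_ok: "lcp_chain s r \<Longrightarrow> lcp_array_ok ((s, h0) # r)"
proof (induction r arbitrary: s h0)
  case Nil then show ?case by (simp add: lcp_array_ok_def)
next
  case (Cons a r)
  obtain t h where a: "a = (t, h)" by (cases a)
  then show ?case using Cons by (simp add: lcp_array_ok_Cons2)
qed

lemma lcp_chain_from_sorts:
  assumes "lcp_chain_from [] out" "set (map fst out) = S" shows "sorts_with_lcp S out"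
proof (cases out)
  case Nil then show ?thesis using assms by (simp add: sorts_with_lcp_def lcp_array_ok_def)
next
  case (Cons a r)
  obtain s h where a: "a = (s, h)" by (cases a)
  have lc: "lcp_chain s r" using assms Cons a by simp
  have "sorted_wrt ord_class.lexordp (map fst out)" using lcp_chain_sorted[OF lc] Cons a by simp
  moreover have "lcp_array_ok out" using lcp_chain_lcp_array_ok[OF lc, of h] Cons a by simp
  ultimately show ?thesis using assms unfolding sorts_with_lcp_def by simp
qed

text \<open>For an output chain the first LCP entry is 0, so its LCP entries sum to L(H).\<close>
lemma lcp_chain_from_Nil_sum: "lcp_chain_from [] out \<Longrightarrow> sum_list (map snd out) = L_H out"
  by (cases out) (auto simp: L_H_def)

section \<open>The LCP array and the distinguishing prefix size\<close>

lemma zt_prefix: "prefix (zt s) (zt u) \<Longrightarrow> s = u"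
  by (induction s u rule: list_induct2') (auto simp: zt_def)

lemma lcp_le_dist_prefix_len:
  assumes "t \<in> S" "t \<noteq> s"
  shows "lcp t s \<le> dist_prefix_len S s"
proof (rule ccontr)
  let ?P = "\<lambda>m. \<forall>u\<in>S. u \<noteq> s \<longrightarrow> \<not> prefix (take m (zt s)) (zt u)"
  define m where "m = dist_prefix_len S s"
  have "?P (length (zt s))" using zt_prefix by auto
  then have P: "?P m" unfolding m_def dist_prefix_len_def by (rule LeastI)
  assume "\<not> lcp t s \<le> dist_prefix_len S s"
  then have m: "m < lcp t s" by (simp add: m_def)
  have "m < length s" using m lcp_le_length[of s t] lcp_sym[of s t] by simp
  then have "take m (zt s) = map Some (take m s)" by (simp add: zt_def take_map)
  also have "take m s = take m t" using take_lcp[of m t s] m by simp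
  finally have "prefix (take m (zt s)) (zt t)"
    unfolding zt_def by (metis prefix_append take_is_prefix take_map)
  then show False using P assms by auto
qed

text \<open>Summing the previous lemma along a chain (whose strings are distinct).\<close>
lemma lcp_chain_sum_le:
  assumes "lcp_chain p r" "p \<in> S" "set (map fst r) \<subseteq> S"
  shows "sum_list (map snd r) \<le> (\<Sum>s\<in>set (map fst r). dist_prefix_len S s)"
  using assms
proof (induction r arbitrary: p)
  case Nil then show ?case by simp
next
  case (Cons a r)
  obtain s h where a: "a = (s, h)" by (cases a)
  have ps: "ord_class.lexordp p s" "h = lcp p s" "lcp_chain s r" using Cons.prems a by auto
  have "p \<noteq> s" using ps lexordp_irreflexive' by metis
  then have h: "h \<le> dist_prefix_len S s" using lcp_le_dist_prefix_len[of p S s] ps Cons.prems by auto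
  have "s \<notin> set (map fst r)" using lcp_chain_less[OF ps(3)] lexordp_irreflexive' by fastforce
  moreover have "sum_list (map snd r) \<le> (\<Sum>s\<in>set (map fst r). dist_prefix_len S s)"
    using Cons.IH[OF ps(3)] Cons.prems a by auto
  ultimately show ?case using h a by simp
qed

lemma L_H_le_dist_prefix_size:
  assumes "lcp_chain_from [] out" "set (map fst out) = S"
  shows "L_H out \<le> dist_prefix_size S"
proof (cases out)
  case Nil then show ?thesis by (simp add: L_H_def)
next
  case (Cons a r)
  obtain s h where a: "a = (s, h)" by (cases a)
  have "lcp_chain s r" using assms Cons a by simp
  then have "sum_list (map snd r) \<le> (\<Sum>t\<in>set (map fst r). dist_prefix_len S t)"
    using lcp_chain_sum_le[of s r S] assms Cons a by auto
  also have "\<dots> \<le> (\<Sum>t\<in>S. dist_prefix_len S t)"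
    using assms Cons a by (intro sum_mono2) auto
  finally show ?thesis using Cons a by (simp add: L_H_def dist_prefix_size_def)
qed

section \<open>LCP-Compare on candidates\<close>

text \<open>Abstractly, the state of a stream is an optional pair (stream index, current head).
A candidate of the tree is such a pair together with its LCP with the last output string p;
cand_of p lifts a head to a candidate.\<close>
definition cand_of :: "'a list \<Rightarrow> (nat \<times> 'a list) option \<Rightarrow> 'a cand" where
  "cand_of p A = map_option (\<lambda>(i,s). (i, s, lcp p s)) A"

text \<open>The smaller of two heads (ties go to the left) and the larger one together with its LCP
to the smaller one: this is what LCP-Compare must return.\<close>
fun min_head :: "(nat \<times> 'a::linorder list) option \<Rightarrow> (nat \<times> 'a list) option \<Rightarrow> (nat \<times> 'a list) option" where
  "min_head None y = y"
| "min_head x None = x"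
| "min_head (Some (i,a)) (Some (j,b)) = (if ord_class.lexordp_eq a b then Some (i,a) else Some (j,b))"

fun loser_cand :: "(nat \<times> 'a::linorder list) option \<Rightarrow> (nat \<times> 'a list) option \<Rightarrow> 'a cand" where
  "loser_cand None y = None"
| "loser_cand x None = None"
| "loser_cand (Some (i,a)) (Some (j,b)) = (if ord_class.lexordp_eq a b then Some (j,b,lcp a b) else Some (i,a,lcp a b))"

text \<open>The LCP stored in a candidate (0 for an exhausted stream); sums of these form the
potential of the amortised analysis.\<close>
fun cand_lcp :: "'a cand \<Rightarrow> nat" where
  "cand_lcp None = 0"
| "cand_lcp (Some (i,s,h)) = h"

definition above :: "'a::linorder list \<Rightarrow> (nat \<times> 'a list) option \<Rightarrow> bool" where
  "above p A = (\<forall>i a. A = Some (i,a) \<longrightarrow> ord_class.lexordp_eq p a)"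

lemma cand_lcp_Nil[simp]: "cand_lcp (cand_of [] A) = 0"
  by (cases A) (auto simp: cand_of_def)

lemma above_Nil[simp]: "above [] A"
  by (simp add: above_def)

lemma lcp_compare_lift:
  fixes p :: "'a::linorder list"
  assumes "above p A" "above p B"
  shows "\<exists>c. lcp_compare (cand_of p A) (cand_of p B) = (cand_of p (min_head A B), loser_cand A B, c) \<and>
     c + cand_lcp (cand_of p A) + cand_lcp (cand_of p B) \<le> (if A \<noteq> None \<and> B \<noteq> None then 1 else 0)
        + cand_lcp (cand_of p (min_head A B)) + cand_lcp (loser_cand A B)"
proof (cases A)
  case None then show ?thesis by (simp add: cand_of_def)
next
  case (Some A')
  then obtain i a where A: "A = Some (i,a)" by (cases A') auto
  show ?thesis
  proof (cases B)
    case None then show ?thesis using A by (simp add: cand_of_def)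
  next
    case (Some B')
    then obtain j b where B: "B = Some (j,b)" by (cases B') auto
    have pa: "ord_class.lexordp_eq p a" and pb: "ord_class.lexordp_eq p b"
      using assms A B by (auto simp: above_def)
    consider "lcp p a > lcp p b" | "lcp p a < lcp p b" | "lcp p a = lcp p b" by linarith
    then show ?thesis
    proof cases
      case 1
      with lcp_decides_order[OF pb 1] have "ord_class.lexordp a b" "lcp a b = lcp p b" by auto
      then show ?thesis using 1 A B by (auto simp: cand_of_def lexordp_into_lexordp_eq)
    next
      case 2
      with lcp_decides_order[OF pa 2] have "ord_class.lexordp b a" "lcp b a = lcp p a" by auto
      then have "\<not> ord_class.lexordp_eq a b" "lcp a b = lcp p a"
        using lcp_sym lexordp_conv_lexordp_eq by metis+
      then show ?thesis using 2 A B by (auto simp: cand_of_def)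
    next
      case 3
      have "lcp p a \<le> lcp a b" using lcp_min_le[of p a b] 3 by simp
      then show ?thesis using 3 A B by (auto simp: cand_of_def Let_def)
    qed
  qed
qed

lemma min_head_cases: "min_head A B = A \<or> min_head A B = B"
  by (cases "(A,B)" rule: min_head.cases) auto

lemma min_head_None: "min_head A B = None \<longleftrightarrow> A = None \<and> B = None"
  by (cases "(A,B)" rule: min_head.cases) auto

lemma above_min_head: "above p (min_head A B) \<longleftrightarrow> above p A \<and> above p B"
  by (cases "(A,B)" rule: min_head.cases)
    (auto simp: above_def intro: lexordp_eq_trans, meson lexordp_eq_linear lexordp_eq_trans)

lemma loser_cand_left_winner:
  "min_head A B = Some (i, s) \<Longrightarrow> A = Some (i, s) \<Longrightarrow> loser_cand A B = cand_of s B"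
  by (cases B) (auto simp: cand_of_def lexordp_eq_refl split: if_splits)

lemma loser_cand_right_winner:
  "min_head A B = Some (i, s) \<Longrightarrow> B = Some (i, s) \<Longrightarrow> A \<noteq> Some (i, s) \<Longrightarrow> loser_cand A B = cand_of s A"
  by (cases A) (auto simp: cand_of_def lcp_sym split: if_splits)

section \<open>The tournament tree\<close>

text \<open>For the heads hs of the streams lo ..< lo + 2^d, tour_min is the overall winner and
tour_tree the tree of losers that LCP-Compare produces; tree_lcps is the potential.\<close>
fun tour_min :: "(nat \<Rightarrow> 'a::linorder list option) \<Rightarrow> nat \<Rightarrow> nat \<Rightarrow> (nat \<times> 'a list) option" where
  "tour_min hs lo 0 = map_option (\<lambda>s. (lo, s)) (hs lo)"
| "tour_min hs lo (Suc d) = min_head (tour_min hs lo d) (tour_min hs (lo + 2^d) d)"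

fun tour_tree :: "(nat \<Rightarrow> 'a::linorder list option) \<Rightarrow> nat \<Rightarrow> nat \<Rightarrow> 'a ltree" where
  "tour_tree hs lo 0 = LLeaf lo"
| "tour_tree hs lo (Suc d) = LNode (tour_tree hs lo d) (loser_cand (tour_min hs lo d) (tour_min hs (lo + 2^d) d))
      (tour_tree hs (lo + 2^d) d)"

fun tree_lcps :: "'a ltree \<Rightarrow> nat" where
  "tree_lcps (LLeaf _) = 0"
| "tree_lcps (LNode l x r) = tree_lcps l + cand_lcp x + tree_lcps r"

lemma all_range2:
  fixes lo :: nat
  shows "(\<forall>j. lo \<le> j \<and> j < lo + 2^Suc d \<longrightarrow> P j) \<longleftrightarrow>
    (\<forall>j. lo \<le> j \<and> j < lo + 2^d \<longrightarrow> P j) \<and> (\<forall>j. lo + 2^d \<le> j \<and> j < lo + 2^d + 2^d \<longrightarrow> P j)"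
  by (auto simp: mult_2) (metis add.assoc not_le)

lemma tour_min_None: "tour_min hs lo d = None \<longleftrightarrow> (\<forall>j. lo \<le> j \<and> j < lo + 2^d \<longrightarrow> hs j = None)"
proof (induction d arbitrary: lo)
  case 0 then show ?case by (auto simp: less_Suc_eq_le dest: le_antisym)
next
  case (Suc d)
  show ?case
    unfolding tour_min.simps min_head_None Suc all_range2 by simp
qed

lemma tour_min_member:
  "tour_min hs lo d = Some (i, s) \<Longrightarrow> lo \<le> i \<and> i < lo + 2^d \<and> hs i = Some s"
proof (induction d arbitrary: lo)
  case 0 then show ?case by auto
next
  case (Suc d)
  consider "tour_min hs lo d = Some (i, s)" | "tour_min hs (lo + 2^d) d = Some (i, s)"
    using Suc.prems min_head_cases by (metis tour_min.simps(2))
  then show ?case by cases (auto dest: Suc.IH)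
qed

lemma above_tour_min_iff:
  "above p (tour_min hs lo d) \<longleftrightarrow> (\<forall>j. lo \<le> j \<and> j < lo + 2^d \<longrightarrow> (\<forall>a. hs j = Some a \<longrightarrow> ord_class.lexordp_eq p a))"
proof (induction d arbitrary: lo)
  case 0 then show ?case by (auto simp: above_def less_Suc_eq_le dest: le_antisym)
next
  case (Suc d)
  show ?case unfolding tour_min.simps above_min_head Suc all_range2 by simp
qed

lemma tour_min_least:
  assumes "tour_min hs lo d = Some (i, s)" "lo \<le> j" "j < lo + 2^d" "hs j = Some a"
  shows "ord_class.lexordp_eq s a"
proof -
  have "above s (tour_min hs lo d)" using assms(1) by (simp add: above_def lexordp_eq_refl)
  then show ?thesis using assms(2-4) unfolding above_tour_min_iff by blast
qed

lemma tour_min_cong: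
  "(\<And>j. lo \<le> j \<Longrightarrow> j < lo + 2^d \<Longrightarrow> hs j = hs2 j) \<Longrightarrow> tour_min hs lo d = tour_min hs2 lo d"
proof (induction d arbitrary: lo)
  case 0 then show ?case by simp
next
  case (Suc d)
  have "tour_min hs lo d = tour_min hs2 lo d" by (rule Suc.IH) (use Suc.prems in auto)
  moreover have "tour_min hs (lo + 2^d) d = tour_min hs2 (lo + 2^d) d" by (rule Suc.IH) (use Suc.prems in auto)
  ultimately show ?case by simp
qed

lemma tour_tree_cong:
  "(\<And>j. lo \<le> j \<Longrightarrow> j < lo + 2^d \<Longrightarrow> hs j = hs2 j) \<Longrightarrow> tour_tree hs lo d = tour_tree hs2 lo d"
proof (induction d arbitrary: lo)
  case 0 then show ?case by simp
next
  case (Suc d)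
  have "tour_tree hs lo d = tour_tree hs2 lo d" by (rule Suc.IH) (use Suc.prems in auto)
  moreover have "tour_tree hs (lo + 2^d) d = tour_tree hs2 (lo + 2^d) d" by (rule Suc.IH) (use Suc.prems in auto)
  moreover have "tour_min hs lo d = tour_min hs2 lo d" by (rule tour_min_cong) (use Suc.prems in auto)
  moreover have "tour_min hs (lo + 2^d) d = tour_min hs2 (lo + 2^d) d" by (rule tour_min_cong) (use Suc.prems in auto)
  ultimately show ?case by simp
qed

lemma tree_lcps_empty:
  "(\<And>j. lo \<le> j \<Longrightarrow> j < lo + 2^d \<Longrightarrow> hs j = None) \<Longrightarrow> tree_lcps (tour_tree hs lo d) = 0"
proof (induction d arbitrary: lo)
  case 0 then show ?case by simp
next
  case (Suc d)
  have "tour_min hs lo d = None" using tour_min_None[of hs lo d] Suc.prems by auto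
  then show ?case using Suc.IH Suc.prems by auto
qed

lemma build_tour_tree:
  assumes "\<forall>j. lo \<le> j \<and> j < lo + 2^d \<longrightarrow> c j = cand_of [] (tour_min hs j 0)"
  shows "\<exists>cb. build c lo d = (tour_tree hs lo d, cand_of [] (tour_min hs lo d), cb) \<and>
    cb + (if tour_min hs lo d = None then 0 else 1)
      \<le> (\<Sum>j=lo..<lo+2^d. if hs j = None then 0 else 1) + tree_lcps (tour_tree hs lo d)"
  using assms
proof (induction d arbitrary: lo)
  case 0
  then show ?case by auto
next
  case (Suc d)
  let ?m = "lo + 2^d"
  have "\<forall>j. lo \<le> j \<and> j < lo + 2^d \<longrightarrow> c j = cand_of [] (tour_min hs j 0)" using Suc.prems by auto
  from Suc.IH[OF this] obtain cl where L: "build c lo d = (tour_tree hs lo d, cand_of [] (tour_min hs lo d), cl)"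
    "cl + (if tour_min hs lo d = None then 0 else 1)
      \<le> (\<Sum>j=lo..<lo+2^d. if hs j = None then 0 else 1) + tree_lcps (tour_tree hs lo d)" by blast
  have "\<forall>j. ?m \<le> j \<and> j < ?m + 2^d \<longrightarrow> c j = cand_of [] (tour_min hs j 0)" using Suc.prems by auto
  from Suc.IH[OF this] obtain cr where R: "build c ?m d = (tour_tree hs ?m d, cand_of [] (tour_min hs ?m d), cr)"
    "cr + (if tour_min hs ?m d = None then 0 else 1)
      \<le> (\<Sum>j=?m..<?m+2^d. if hs j = None then 0 else 1) + tree_lcps (tour_tree hs ?m d)" by blast
  from lcp_compare_lift[of "[]" "tour_min hs lo d" "tour_min hs ?m d"] obtain cc where
    C: "lcp_compare (cand_of [] (tour_min hs lo d)) (cand_of [] (tour_min hs ?m d))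
       = (cand_of [] (min_head (tour_min hs lo d) (tour_min hs ?m d)), loser_cand (tour_min hs lo d) (tour_min hs ?m d), cc)"
    "cc \<le> (if tour_min hs lo d \<noteq> None \<and> tour_min hs ?m d \<noteq> None then 1 else 0)
          + cand_lcp (loser_cand (tour_min hs lo d) (tour_min hs ?m d))" by auto
  have S: "(\<Sum>j=lo..<lo+2^Suc d. if hs j = None then 0 else 1) =
     (\<Sum>j=lo..<?m. if hs j = None then (0::nat) else 1) + (\<Sum>j=?m..<?m+2^d. if hs j = None then 0 else 1)"
    by (subst sum.atLeastLessThan_concat[symmetric]) (auto simp: mult_2 add.assoc)
  have B: "build c lo (Suc d) = (tour_tree hs lo (Suc d), cand_of [] (tour_min hs lo (Suc d)), cl + cr + cc)"
    using L(1) R(1) C(1) by (simp add: Let_def)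
  have ph: "tree_lcps (tour_tree hs lo (Suc d)) = tree_lcps (tour_tree hs lo d) + cand_lcp (loser_cand (tour_min hs lo d) (tour_min hs ?m d)) + tree_lcps (tour_tree hs ?m d)"
    by simp
  have ind: "(if tour_min hs lo (Suc d) = None then 0 else 1) + (if tour_min hs lo d \<noteq> None \<and> tour_min hs ?m d \<noteq> None then 1 else 0)
     = (if tour_min hs lo d = None then 0 else 1) + (if tour_min hs ?m d = None then 0 else (1::nat))"
    by (simp add: min_head_None)
  have "cl + cr + cc + (if tour_min hs lo (Suc d) = None then 0 else 1)
      \<le> (\<Sum>j=lo..<lo+2^Suc d. if hs j = None then 0 else 1) + tree_lcps (tour_tree hs lo (Suc d))"
    using L(2) R(2) C(2) S ph ind by linarith
  with B show ?case by blast
qed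

text \<open>The
hypotheses say that only stream i changed and that all new heads are at least the string s
just output, so that every candidate on the path carries its LCP relative to s.\<close>
lemma replay_tour_tree:
  fixes s :: "'a::linorder list"
  assumes "tour_min hs lo d = Some (i, s)"
    and "\<forall>j a. lo \<le> j \<and> j < lo + 2^d \<and> hs2 j = Some a \<longrightarrow> ord_class.lexordp_eq s a"
    and "\<forall>j. j \<noteq> i \<longrightarrow> hs2 j = hs j"
  shows "\<exists>c. replay (cand_of s (tour_min hs2 i 0)) i lo d (tour_tree hs lo d)
      = (tour_tree hs2 lo d, cand_of s (tour_min hs2 lo d), c) \<and>
     c + tree_lcps (tour_tree hs lo d) + cand_lcp (cand_of s (tour_min hs2 i 0))
       \<le> d + tree_lcps (tour_tree hs2 lo d) + cand_lcp (cand_of s (tour_min hs2 lo d))"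
  using assms
proof (induction d arbitrary: lo)
  case 0
  then have "i = lo" using tour_min_member[OF 0(1)] by auto
  then show ?case by simp
next
  case (Suc d)
  let ?m = "lo + 2^d"
  let ?x = "cand_of s (tour_min hs2 i 0)"
  let ?L = "tour_min hs2 lo d" and ?R = "tour_min hs2 ?m d"
  have ge: "\<forall>j a. lo \<le> j \<and> j < ?m + 2^d \<and> hs2 j = Some a \<longrightarrow> ord_class.lexordp_eq s a"
    using Suc.prems(2) by (simp add: mult_2 add.assoc)
  have geL: "\<forall>j a. lo \<le> j \<and> j < lo + 2^d \<and> hs2 j = Some a \<longrightarrow> ord_class.lexordp_eq s a"
    and geR: "\<forall>j a. ?m \<le> j \<and> j < ?m + 2^d \<and> hs2 j = Some a \<longrightarrow> ord_class.lexordp_eq s a"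
    using ge[rule_format] by (auto intro: order.trans[OF le_add1] less_le_trans[OF _ le_add1])
  have "above s ?L" "above s ?R" using geL geR by (auto simp: above_tour_min_iff)
  from lcp_compare_lift[OF this] obtain cc where
    C: "lcp_compare (cand_of s ?L) (cand_of s ?R) = (cand_of s (min_head ?L ?R), loser_cand ?L ?R, cc)"
    and cost: "cc + cand_lcp (cand_of s ?L) + cand_lcp (cand_of s ?R)
          \<le> (if ?L \<noteq> None \<and> ?R \<noteq> None then 1 else 0)
            + cand_lcp (cand_of s (min_head ?L ?R)) + cand_lcp (loser_cand ?L ?R)"
    by blast
  then have cost: "cc + cand_lcp (cand_of s ?L) + cand_lcp (cand_of s ?R)
          \<le> 1 + cand_lcp (cand_of s (min_head ?L ?R)) + cand_lcp (loser_cand ?L ?R)"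
    by (simp split: if_split_asm)
  have win: "min_head (tour_min hs lo d) (tour_min hs ?m d) = Some (i, s)" using Suc.prems(1) by simp
  show ?case
  proof (cases "i < ?m")
    case True
    have same: "tour_min hs2 ?m d = tour_min hs ?m d" "tour_tree hs2 ?m d = tour_tree hs ?m d"
      using Suc.prems(3) True by (auto intro!: tour_min_cong tour_tree_cong)
    have "tour_min hs ?m d \<noteq> Some (i, s)" using tour_min_member[of hs ?m d i s] True by auto
    then have left: "tour_min hs lo d = Some (i, s)" using win min_head_cases by metis
    have los: "loser_cand (tour_min hs lo d) (tour_min hs ?m d) = cand_of s ?R"
      using loser_cand_left_winner[OF win left] same by simp
    from Suc.IH[OF left geL Suc.prems(3)] obtain c1 where
      IH: "replay ?x i lo d (tour_tree hs lo d) = (tour_tree hs2 lo d, cand_of s ?L, c1)"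
          "c1 + tree_lcps (tour_tree hs lo d) + cand_lcp ?x
             \<le> d + tree_lcps (tour_tree hs2 lo d) + cand_lcp (cand_of s ?L)"
      by blast
    show ?thesis
    proof (intro exI conjI)
      show "replay ?x i lo (Suc d) (tour_tree hs lo (Suc d))
          = (tour_tree hs2 lo (Suc d), cand_of s (tour_min hs2 lo (Suc d)), c1 + cc)"
        using IH(1) C True los same by (simp add: Let_def)
      show "c1 + cc + tree_lcps (tour_tree hs lo (Suc d)) + cand_lcp ?x
          \<le> Suc d + tree_lcps (tour_tree hs2 lo (Suc d)) + cand_lcp (cand_of s (tour_min hs2 lo (Suc d)))"
        using IH(2) cost los same by simp
    qed
  next
    case False
    have same: "tour_min hs2 lo d = tour_min hs lo d" "tour_tree hs2 lo d = tour_tree hs lo d"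
      using Suc.prems(3) False by (auto intro!: tour_min_cong tour_tree_cong)
    have other: "tour_min hs lo d \<noteq> Some (i, s)" using tour_min_member[of hs lo d i s] False by auto
    then have right: "tour_min hs ?m d = Some (i, s)" using win min_head_cases by metis
    have los: "loser_cand (tour_min hs lo d) (tour_min hs ?m d) = cand_of s ?L"
      using loser_cand_right_winner[OF win right other] same by simp
    from Suc.IH[OF right geR Suc.prems(3)] obtain c1 where
      IH: "replay ?x i ?m d (tour_tree hs ?m d) = (tour_tree hs2 ?m d, cand_of s ?R, c1)"
          "c1 + tree_lcps (tour_tree hs ?m d) + cand_lcp ?x
             \<le> d + tree_lcps (tour_tree hs2 ?m d) + cand_lcp (cand_of s ?R)"
      by blast
    show ?thesis
    proof (intro exI conjI)
      show "replay ?x i lo (Suc d) (tour_tree hs lo (Suc d))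
          = (tour_tree hs2 lo (Suc d), cand_of s (tour_min hs2 lo (Suc d)), c1 + cc)"
        using IH(1) C False los same by (simp add: Let_def)
      show "c1 + cc + tree_lcps (tour_tree hs lo (Suc d)) + cand_lcp ?x
          \<le> Suc d + tree_lcps (tour_tree hs2 lo (Suc d)) + cand_lcp (cand_of s (tour_min hs2 lo (Suc d)))"
        using IH(2) cost los same by simp
    qed
  qed
qed

section \<open>The merge loop\<close>

text \<open>The state of the merge loop is given by the heads hs of the K = 2^d streams (the
strings currently in the tree) and the rest ss of every stream.\<close>
definition stream_set :: "(nat \<Rightarrow> 'a list option) \<Rightarrow> ('a list \<times> nat) list list \<Rightarrow> nat \<Rightarrow> 'a list set" where
  "stream_set hs ss j = set_option (hs j) \<union> fst ` set (ss ! j)"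

definition remaining :: "nat \<Rightarrow> (nat \<Rightarrow> 'a list option) \<Rightarrow> ('a list \<times> nat) list list \<Rightarrow> 'a list set" where
  "remaining d hs ss = (\<Union>j<2^d. stream_set hs ss j)"

definition pending :: "nat \<Rightarrow> (nat \<Rightarrow> 'a list option) \<Rightarrow> ('a list \<times> nat) list list \<Rightarrow> nat" where
  "pending d hs ss = (\<Sum>j<2^d. (if hs j = None then 0 else 1) + length (ss ! j))"

definition pending_lcps :: "nat \<Rightarrow> ('a list \<times> nat) list list \<Rightarrow> nat" where
  "pending_lcps d ss = (\<Sum>j<2^d. sum_list (map snd (ss ! j)))"

definition merge_inv :: "nat \<Rightarrow> 'a::linorder list \<Rightarrow> (nat \<Rightarrow> 'a list option) \<Rightarrow> ('a list \<times> nat) list list \<Rightarrow> bool" where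
  "merge_inv d p hs ss \<longleftrightarrow> length ss = 2^d \<and>
     (\<forall>j<2^d. hs j = None \<longrightarrow> ss ! j = []) \<and>
     (\<forall>j<2^d. \<forall>a. hs j = Some a \<longrightarrow> lcp_chain a (ss ! j) \<and> ord_class.lexordp_eq p a) \<and>
     (\<forall>j<2^d. \<forall>k<2^d. j \<noteq> k \<longrightarrow> stream_set hs ss j \<inter> stream_set hs ss k = {})"

lemma sum_update_one:
  fixes g g2 :: "nat \<Rightarrow> nat"
  assumes "i < n" "\<forall>j. j \<noteq> i \<longrightarrow> g2 j = g j" "g i = g2 i + e"
  shows "(\<Sum>j<n. g j) = (\<Sum>j<n. g2 j) + e"
proof -
  have "(\<Sum>j<n. g j) = g i + (\<Sum>j\<in>{..<n} - {i}. g j)" using assms(1) by (simp add: sum.remove)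
  moreover have "(\<Sum>j<n. g2 j) = g2 i + (\<Sum>j\<in>{..<n} - {i}. g2 j)" using assms(1) by (simp add: sum.remove)
  moreover have "(\<Sum>j\<in>{..<n} - {i}. g j) = (\<Sum>j\<in>{..<n} - {i}. g2 j)" using assms(2) by (intro sum.cong) auto
  ultimately show ?thesis using assms(3) by simp
qed

lemma merge_step:
  fixes s :: "'a::linorder list"
  assumes inv: "merge_inv d p hs ss" and win: "tour_min hs 0 d = Some (i, s)"
  defines "hs2 \<equiv> hs(i := (case ss ! i of [] \<Rightarrow> None | (s', h') # r \<Rightarrow> Some s'))"
    and "ss2 \<equiv> (case ss ! i of [] \<Rightarrow> ss | (s', h') # r \<Rightarrow> ss[i := r])"
    and "x \<equiv> (case ss ! i of [] \<Rightarrow> None | (s', h') # r \<Rightarrow> Some (i, s', h'))"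
  shows "merge_inv d s hs2 ss2" "ord_class.lexordp_eq p s"
    and "x = cand_of s (tour_min hs2 i 0)" "\<forall>j. j \<noteq> i \<longrightarrow> hs2 j = hs j"
    and "pending d hs ss = pending d hs2 ss2 + 1"
    and "pending_lcps d ss = pending_lcps d ss2 + cand_lcp x"
    and "remaining d hs ss = insert s (remaining d hs2 ss2)" "s \<notin> remaining d hs2 ss2"
proof -
  note inv = inv[unfolded merge_inv_def]
  have iK: "i < 2^d" and hsi: "hs i = Some s" using tour_min_member[OF win] by auto
  have lenss: "length ss = 2^d" using inv by simp
  have chi: "lcp_chain s (ss ! i)" using inv iK hsi by auto
  show "ord_class.lexordp_eq p s" using inv iK hsi by auto
  show "x = cand_of s (tour_min hs2 i 0)"
    using chi unfolding x_def hs2_def by (cases "ss ! i") (auto simp: cand_of_def)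
  show hs2o: "\<forall>j. j \<noteq> i \<longrightarrow> hs2 j = hs j" by (simp add: hs2_def)
  have ss2o: "\<forall>j. j \<noteq> i \<longrightarrow> ss2 ! j = ss ! j" by (cases "ss ! i") (auto simp: ss2_def)
  have streams: "\<forall>j<2^d. stream_set hs ss j
      = (if j = i then insert s (stream_set hs2 ss2 j) else stream_set hs2 ss2 j)"
    using hsi lenss iK by (cases "ss ! i") (auto simp: stream_set_def hs2_def ss2_def)
  have "stream_set hs2 ss2 i \<subseteq> fst ` set (ss ! i)"
    using lenss iK by (cases "ss ! i") (auto simp: stream_set_def hs2_def ss2_def)
  then have s_new: "s \<notin> stream_set hs2 ss2 i"
    using lcp_chain_less[OF chi] lexordp_irreflexive' by blast
  show "merge_inv d s hs2 ss2"
    unfolding merge_inv_def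
  proof (intro conjI allI impI)
    show "length ss2 = 2^d" using lenss by (cases "ss ! i") (auto simp: ss2_def)
  next
    fix j :: nat assume "j < 2^d" "hs2 j = None"
    then show "ss2 ! j = []" using inv hs2o ss2o unfolding ss2_def hs2_def
      by (cases "j = i"; cases "ss ! i") auto
  next
    fix j :: nat and a assume "j < 2^d" "hs2 j = Some a"
    then show "lcp_chain a (ss2 ! j)" using inv hs2o ss2o chi lenss unfolding ss2_def hs2_def
      by (cases "j = i"; cases "ss ! i") auto
  next
    fix j :: nat and a assume j: "j < 2^d" "hs2 j = Some a"
    show "ord_class.lexordp_eq s a"
    proof (cases "j = i")
      case True
      then show ?thesis using j chi unfolding hs2_def
        by (cases "ss ! i") (auto intro: lexordp_into_lexordp_eq)
    next
      case False
      then show ?thesis using j tour_min_least[OF win] hs2o by auto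
    qed
  next
    fix j k :: nat assume jk: "j < 2^d" "k < 2^d" "j \<noteq> k"
    have "stream_set hs2 ss2 j \<subseteq> stream_set hs ss j" "stream_set hs2 ss2 k \<subseteq> stream_set hs ss k"
      using streams jk by (auto split: if_splits)
    then show "stream_set hs2 ss2 j \<inter> stream_set hs2 ss2 k = {}" using inv jk by blast
  qed
  show "pending d hs ss = pending d hs2 ss2 + 1"
    unfolding pending_def
    by (rule sum_update_one[OF iK])
      (use hsi hs2o ss2o lenss iK in \<open>auto simp: hs2_def ss2_def split: list.splits\<close>)
  show "pending_lcps d ss = pending_lcps d ss2 + cand_lcp x"
    unfolding pending_lcps_def
    by (rule sum_update_one[OF iK])
      (use ss2o lenss iK in \<open>auto simp: x_def ss2_def split: list.splits\<close>)
  show "remaining d hs ss = insert s (remaining d hs2 ss2)"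
    unfolding remaining_def using streams iK by auto
  show "s \<notin> remaining d hs2 ss2"
  proof
    assume "s \<in> remaining d hs2 ss2"
    then obtain j where j: "j < 2^d" "s \<in> stream_set hs2 ss2 j" by (auto simp: remaining_def)
    have "j \<noteq> i" using j s_new by auto
    then have "s \<in> stream_set hs ss j" using j streams by auto
    moreover have "s \<in> stream_set hs ss i" using hsi by (simp add: stream_set_def)
    ultimately show False using inv j iK \<open>j \<noteq> i\<close> by blast
  qed
qed

lemma mloop_correct:
  assumes "merge_inv d p hs ss" "f = pending d hs ss"
    and "mloop f d ss (tour_tree hs 0 d) (cand_of p (tour_min hs 0 d)) = (out, c, ops)"
  shows "set (map fst out) = remaining d hs ss \<and> lcp_chain_from p out \<and> length out = f \<and> ops = f * (d + 1) \<and>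
     c + tree_lcps (tour_tree hs 0 d) + cand_lcp (cand_of p (tour_min hs 0 d)) + pending_lcps d ss
       \<le> d * f + sum_list (map snd out)"
  using assms
proof (induction f arbitrary: p hs ss out c ops)
  case 0
  have hsN: "\<forall>j<2^d. hs j = None" and ssN: "\<forall>j<2^d. ss ! j = []"
    using 0 unfolding pending_def by (auto split: if_splits)
  then have sm: "tour_min hs 0 d = None" by (simp add: tour_min_None)
  have "tree_lcps (tour_tree hs 0 d) = 0" using hsN by (intro tree_lcps_empty) auto
  moreover have "remaining d hs ss = {}" using hsN ssN by (auto simp: remaining_def stream_set_def)
  moreover have "pending_lcps d ss = 0" using ssN by (simp add: pending_lcps_def)
  ultimately show ?case using 0 sm by (auto simp: cand_of_def)
next
  case (Suc f)
  have "tour_min hs 0 d \<noteq> None"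
  proof
    assume "tour_min hs 0 d = None"
    then have "pending d hs ss = 0"
      using Suc.prems(1) unfolding tour_min_None pending_def merge_inv_def by auto
    then show False using Suc.prems(2) by simp
  qed
  then obtain i s where win: "tour_min hs 0 d = Some (i, s)" by auto
  define hs2 where "hs2 = hs(i := (case ss ! i of [] \<Rightarrow> None | (s', h') # r \<Rightarrow> Some s'))"
  define ss2 where "ss2 = (case ss ! i of [] \<Rightarrow> ss | (s', h') # r \<Rightarrow> ss[i := r])"
  define x where "x = (case ss ! i of [] \<Rightarrow> None | (s', h') # r \<Rightarrow> Some (i, s', h'))"
  note step = merge_step[OF Suc.prems(1) win, folded hs2_def ss2_def x_def]
  have above2: "\<forall>j a. 0 \<le> j \<and> j < 0 + 2^d \<and> hs2 j = Some a \<longrightarrow> ord_class.lexordp_eq s a"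
    using step(1) by (auto simp: merge_inv_def)
  from replay_tour_tree[OF win above2 step(4)] obtain c1 where
    R: "replay x i 0 d (tour_tree hs 0 d) = (tour_tree hs2 0 d, cand_of s (tour_min hs2 0 d), c1)"
       "c1 + tree_lcps (tour_tree hs 0 d) + cand_lcp x
          \<le> d + tree_lcps (tour_tree hs2 0 d) + cand_lcp (cand_of s (tour_min hs2 0 d))"
    unfolding step(3) by blast
  obtain out2 c2 ops2 where M: "mloop f d ss2 (tour_tree hs2 0 d) (cand_of s (tour_min hs2 0 d)) = (out2, c2, ops2)"
    by (metis prod_cases3)
  note IH = Suc.IH[OF step(1) _ M]
  have "mloop (Suc f) d ss (tour_tree hs 0 d) (cand_of p (tour_min hs 0 d))
      = ((s, lcp p s) # out2, c1 + c2, d + 1 + ops2)"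
    using R(1) M win unfolding x_def ss2_def
    by (cases "ss ! i") (auto simp: cand_of_def Let_def)
  then have out: "out = (s, lcp p s) # out2" "c = c1 + c2" "ops = d + 1 + ops2"
    using Suc.prems(3) by auto
  have IH: "set (map fst out2) = remaining d hs2 ss2 \<and> lcp_chain_from s out2 \<and> length out2 = f
      \<and> ops2 = f * (d + 1) \<and> c2 + tree_lcps (tour_tree hs2 0 d) + cand_lcp (cand_of s (tour_min hs2 0 d))
         + pending_lcps d ss2 \<le> d * f + sum_list (map snd out2)"
    using IH Suc.prems(2) step(5) by simp
  then have "lcp_chain s out2" using lcp_chain_from_strict step(8) by fastforce
  then have "lcp_chain_from p out" using out step(2) by simp
  then show ?case using IH out step(6,7) R(2) win by (auto simp: cand_of_def)
qed

lemma kmerge_correct: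
  fixes ss :: "('a::linorder list \<times> nat) list list"
  assumes len: "length ss = 2^d"
    and chains: "\<forall>j<2^d. lcp_chain_from [] (ss ! j)"
    and disj: "\<forall>j<2^d. \<forall>k<2^d. j \<noteq> k \<longrightarrow> fst ` set (ss ! j) \<inter> fst ` set (ss ! k) = {}"
    and km: "kmerge d ss = (out, c, ops)"
  shows "set (map fst out) = (\<Union>j<2^d. fst ` set (ss ! j)) \<and> lcp_chain_from [] out
     \<and> length out = (\<Sum>j<2^d. length (ss ! j))
     \<and> ops = 2^d - 1 + (\<Sum>j<2^d. length (ss ! j)) * (d + 1)
     \<and> c + (\<Sum>j<2^d. L_H (ss ! j)) + (if (\<Sum>j<2^d. length (ss ! j)) = 0 then 0 else 1)
        \<le> L_H out + d * (\<Sum>j<2^d. length (ss ! j)) + (\<Sum>j<2^d. if ss ! j = [] then 0 else 1)"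
proof -
  define hs where "hs = (\<lambda>i. if i < length ss then (case ss ! i of [] \<Rightarrow> None | (s, _) # _ \<Rightarrow> Some s) else None)"
  define heads :: "nat \<Rightarrow> 'a cand" where "heads = (\<lambda>i. if i < length ss then (case ss ! i of [] \<Rightarrow> None
                                                | (s, _) # _ \<Rightarrow> Some (i, s, 0)) else None)"
  define n where "n = (\<Sum>j<2^d. length (ss ! j))"
  have "\<forall>j. 0 \<le> j \<and> j < 0 + 2^d \<longrightarrow> heads j = cand_of [] (tour_min hs j 0)"
    unfolding heads_def hs_def by (auto simp: cand_of_def split: list.splits)
  from build_tour_tree[OF this] obtain cb where
    B: "build heads 0 d = (tour_tree hs 0 d, cand_of [] (tour_min hs 0 d), cb)"
       "cb + (if tour_min hs 0 d = None then 0 else 1)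
        \<le> (\<Sum>j=0..<0+2^d. if hs j = None then 0 else 1) + tree_lcps (tour_tree hs 0 d)" by blast
  have streams: "\<forall>j<2^d. stream_set hs (map tl ss) j = fst ` set (ss ! j)"
    using len by (auto simp: stream_set_def hs_def split: list.splits)
  have inv: "merge_inv d [] hs (map tl ss)"
    unfolding merge_inv_def
  proof (intro conjI allI impI)
    show "length (map tl ss) = 2^d" using len by simp
  next
    fix j :: nat assume "j < 2^d" "hs j = None"
    then show "map tl ss ! j = []" using len by (auto simp: hs_def split: list.splits)
  next
    fix j :: nat and a assume "j < 2^d" "hs j = Some a"
    then show "lcp_chain a (map tl ss ! j)" using len chains by (auto simp: hs_def split: list.splits)
  next
    fix j :: nat and a assume "j < 2^d" "hs j = Some a"
    then show "ord_class.lexordp_eq [] a" by simp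
  next
    fix j k :: nat assume "j < 2^d" "k < 2^d" "j \<noteq> k"
    then show "stream_set hs (map tl ss) j \<inter> stream_set hs (map tl ss) k = {}" using streams disj by simp
  qed
  have pend: "pending d hs (map tl ss) = n"
    unfolding pending_def n_def using len by (intro sum.cong) (auto simp: hs_def split: list.splits)
  obtain out2 cm ops2 where
    M: "mloop n d (map tl ss) (tour_tree hs 0 d) (cand_of [] (tour_min hs 0 d)) = (out2, cm, ops2)"
    by (metis prod_cases3)
  note MC = mloop_correct[OF inv pend[symmetric] M]
  have "sum_list (map length ss) = n"
    unfolding n_def using len by (simp add: sum_list_sum_nth atLeast0LessThan)
  then have "kmerge d ss = (out2, cb + cm, 2^d - 1 + ops2)"
    unfolding kmerge_def using B(1) M heads_def by (simp add: Let_def)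
  then have o: "out = out2" "c = cb + cm" "ops = 2^d - 1 + ops2" using km by auto
  have "remaining d hs (map tl ss) = (\<Union>j<2^d. fst ` set (ss ! j))"
    unfolding remaining_def using streams by auto
  moreover have "pending_lcps d (map tl ss) = (\<Sum>j<2^d. L_H (ss ! j))"
    unfolding pending_lcps_def L_H_def using len by (intro sum.cong) (auto simp: drop_Suc)
  moreover have "(\<Sum>j=0..<0+2^d. if hs j = None then 0 else 1) = (\<Sum>j<2^d. if ss ! j = [] then 0 else (1::nat))"
    using len by (auto simp: atLeast0LessThan hs_def split: list.splits intro!: sum.cong)
  moreover have "(tour_min hs 0 d = None) = (n = 0)"
  proof -
    have "\<And>j. j < 2^d \<Longrightarrow> (hs j = None) = (ss ! j = [])"
      using len by (auto simp: hs_def split: list.splits)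
    then show ?thesis unfolding tour_min_None n_def by auto
  qed
  moreover have "sum_list (map snd out2) = L_H out2" using MC lcp_chain_from_Nil_sum by blast
  ultimately show ?thesis using MC o B(2) unfolding n_def by auto
qed

lemma pstart_Suc: "pstart K n (Suc j) = pstart K n j + psize K n j"
  unfolding pstart_def psize_def by (auto simp: min_def)

lemma pstart_K: assumes "K > 0" shows "pstart K n K = n"
proof -
  have "n mod K < K" using assms by simp
  then show ?thesis unfolding pstart_def by (simp add: min_def mult.commute)
qed
lemma pstart_le: "j \<le> K \<Longrightarrow> K > 0 \<Longrightarrow> pstart K n j \<le> n"
proof -
  assume a: "j \<le> K" "K > 0"
  have "pstart K n j \<le> pstart K n K"
    unfolding pstart_def using a by (intro add_mono mult_le_mono1) auto
  then show ?thesis using pstart_K[OF a(2)] by simp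
qed

lemma concat_split_parts_prefix:
  assumes "m \<le> K"
  shows "concat (map (\<lambda>j. take (psize K (length xs) j) (drop (pstart K (length xs) j) xs)) [0..<m])
    = take (pstart K (length xs) m) xs"
  using assms
proof (induction m)
  case 0 then show ?case by (simp add: pstart_def)
next
  case (Suc m)
  then show ?case by (simp add: pstart_Suc take_add)
qed

lemma concat_split_parts: "K > 0 \<Longrightarrow> concat (split_parts K xs) = xs"
  unfolding split_parts_def using concat_split_parts_prefix[of K K xs] by (simp add: pstart_K)

lemma length_split_parts: "length (split_parts K xs) = K"
  by (simp add: split_parts_def)

lemma length_split_parts_nth:
  assumes "j < K" shows "length (split_parts K xs ! j) = psize K (length xs) j"
proof -
  have "pstart K (length xs) (Suc j) \<le> length xs" using assms by (intro pstart_le) auto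
  then show ?thesis using assms by (simp add: split_parts_def pstart_Suc)
qed

text \<open>A part of a list of at most K^(k+1) elements has at most K^k elements; this bounds the
recursion depth by the least k with n \<le> K^k.\<close>
lemma psize_le_pow:
  assumes "K \<ge> 1" "n \<le> K ^ Suc k"
  shows "psize K n j \<le> K ^ k"
proof (cases "n mod K = 0")
  case True
  have "n div K \<le> K ^ Suc k div K" by (rule div_le_mono[OF assms(2)])
  then show ?thesis using True assms(1) unfolding psize_def by simp
next
  case False
  then have "n \<noteq> K ^ Suc k" by auto
  then have "n < K * K ^ k" using assms(2) by simp
  then have "n div K < K ^ k" using assms(1) by (simp add: div_less_iff_less_mult mult.commute)
  then show ?thesis unfolding psize_def by simp
qed

lemma distinct_concat_nth:
  "distinct (concat L) \<Longrightarrow> i < length L \<Longrightarrow> j < length L \<Longrightarrow> i \<noteq> j \<Longrightarrow> set (L ! i) \<inter> set (L ! j) = {}"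
proof (induction L arbitrary: i j)
  case Nil then show ?case by simp
next
  case (Cons x L)
  show ?case
  proof (cases i)
    case 0
    then obtain j' where j': "j = Suc j'" "j' < length L" using Cons by (cases j) auto
    have m: "L ! j' \<in> set L" using j'(2) by simp
    have "set x \<inter> set (L ! j') = {}" using Cons.prems(1) m by auto
    then show ?thesis using 0 j'(1) by simp
  next
    case (Suc i')
    show ?thesis
    proof (cases j)
      case 0
      have i': "i' < length L" using Cons.prems Suc by simp
      have m: "L ! i' \<in> set L" using i' by simp
      have "set x \<inter> set (L ! i') = {}" using Cons.prems(1) m by auto
      then show ?thesis using 0 Suc by auto
    next
      case (Suc j') then show ?thesis using Cons \<open>i = Suc i'\<close> by auto
    qed
  qed
qed

section \<open>Analysis of K-way LCP-mergesort\<close>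

text \<open>The accounting of one recursion level: if the K parts (sizes np, comparisons cp, other
operations op, LCP sums Lp) satisfy the bounds for depth k, and the merge satisfies the bound
of kmerge_correct, then the whole satisfies the bounds for depth k + 1.  The nonempty parts
pay for the comparisons of building the tournament tree.\<close>
lemma merge_level_bound:
  fixes np cp op Lp :: "nat \<Rightarrow> nat"
  assumes parts_c: "\<forall>j<K. cp j + (if np j = 0 then 0 else 1) \<le> Lp j + d * np j * k + np j"
    and parts_op: "\<forall>j<K. op j \<le> (d + K + 2) * np j * k + 1"
    and merge_c: "cm + (\<Sum>j<K. Lp j) + 1 \<le> L + d * n + (\<Sum>j<K. if np j = 0 then 0 else 1)"
    and merge_op: "opm = K - 1 + n * (d + 1)"
    and size: "(\<Sum>j<K. np j) = n" and "n \<ge> 2" "K \<ge> 1"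
  shows "(\<Sum>j<K. cp j) + cm + 1 \<le> L + d * n * Suc k + n"
    and "1 + n + (\<Sum>j<K. op j) + opm \<le> (d + K + 2) * n * Suc k + 1"
proof -
  have "(\<Sum>j<K. cp j + (if np j = 0 then 0 else 1)) \<le> (\<Sum>j<K. Lp j + (d * k) * np j + np j)"
    using parts_c by (intro sum_mono) (simp add: algebra_simps)
  also have "\<dots> = (\<Sum>j<K. Lp j) + (d * k) * n + n"
    by (simp add: sum.distrib sum_distrib_left[symmetric] size)
  finally have "(\<Sum>j<K. cp j) + (\<Sum>j<K. if np j = 0 then 0 else 1) \<le> (\<Sum>j<K. Lp j) + d * k * n + n"
    by (simp add: sum.distrib)
  then show "(\<Sum>j<K. cp j) + cm + 1 \<le> L + d * n * Suc k + n"
    using merge_c by (simp add: algebra_simps)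
  have "(\<Sum>j<K. op j) \<le> (\<Sum>j<K. ((d + K + 2) * k) * np j + 1)"
    using parts_op by (intro sum_mono) (simp add: algebra_simps)
  also have "\<dots> = (d + K + 2) * k * n + K"
    by (subst sum.distrib) (simp add: sum_distrib_left[symmetric] size)
  finally have ops_parts: "(\<Sum>j<K. op j) \<le> (d + K + 2) * k * n + K" .
  have "1 + n + (\<Sum>j<K. op j) + opm = (\<Sum>j<K. op j) + K + (d + 2) * n"
    using merge_op \<open>K \<ge> 1\<close> by simp
  also have "\<dots> \<le> (d + K + 2) * k * n + 2 * K + (d + 2) * n"
    using ops_parts by simp
  also have "\<dots> \<le> (d + K + 2) * k * n + K * n + (d + 2) * n"
    using \<open>n \<ge> 2\<close> by simp
  also have "\<dots> = (d + K + 2) * n * Suc k"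
    by (simp add: algebra_simps)
  finally show "1 + n + (\<Sum>j<K. op j) + opm \<le> (d + K + 2) * n * Suc k + 1"
    by simp
qed

text \<open>One recursive call of mergesort on at least two strings; afterwards the defining
equation of msort is only unfolded explicitly.\<close>
lemma msort_merge:
  assumes "length xs \<ge> 2" "d \<ge> 1"
  shows "msort d xs =
     (let rs = map (msort d) (split_parts (2 ^ d) xs);
          (out, c, ops) = kmerge d (map fst rs)
      in (out, sum_list (map (fst \<circ> snd) rs) + c,
          1 + length xs + sum_list (map (snd \<circ> snd) rs) + ops))"
  using assms by (subst msort.simps) simp

declare msort.simps [simp del]

lemma msort_correct_and_cost:
  assumes "d \<ge> 1" "distinct xs" "msort d xs = (out, c, ops)"
  shows "set (map fst out) = set xs \<and> length out = length xs \<and> lcp_chain_from [] out \<and>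
    (\<forall>k. length xs \<le> (2^d)^k \<longrightarrow>
       c + (if xs = [] then 0 else 1) \<le> L_H out + d * length xs * k + length xs \<and>
       ops \<le> (d + 2^d + 2) * length xs * k + 1)"
  using assms
proof (induction d xs arbitrary: out c ops rule: msort.induct)
  case (1 d xs)
  show ?case
  proof (cases "length xs \<le> 1")
    case True
    then have "msort d xs = (map (\<lambda>s. (s, 0)) xs, 0, 1)" by (subst msort.simps) simp
    then show ?thesis using True 1(4) by (cases xs) (auto simp: L_H_def)
  next
    case False
    define K where "K = (2::nat) ^ d"
    define n where "n = length xs"
    define P where "P = split_parts K xs"
    define outp where "outp j = fst (msort d (P ! j))" for j
    define cp where "cp j = fst (snd (msort d (P ! j)))" for j
    define op where "op j = snd (snd (msort d (P ! j)))" for j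
    have K1: "K \<ge> 1" and n2: "n \<ge> 2" using False by (simp_all add: K_def n_def)
    have lenP: "length P = K" by (simp add: P_def length_split_parts)
    have catP: "concat P = xs" using K1 by (simp add: P_def concat_split_parts)
    have IH: "set (map fst (outp j)) = set (P ! j) \<and> length (outp j) = length (P ! j)
        \<and> lcp_chain_from [] (outp j) \<and>
        (\<forall>k. length (P ! j) \<le> K^k \<longrightarrow>
          cp j + (if P ! j = [] then 0 else 1) \<le> L_H (outp j) + d * length (P ! j) * k + length (P ! j) \<and>
          op j \<le> (d + K + 2) * length (P ! j) * k + 1)" if j: "j < K" for j
    proof -
      have mem: "P ! j \<in> set (split_parts (2^d) xs)" using j lenP by (simp add: P_def K_def)
      have "distinct (P ! j)" using 1(3) catP mem by (metis P_def K_def distinct_concat_iff)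
      moreover have "\<not> (length xs \<le> 1 \<or> d = 0)" using False 1(2) by simp
      moreover have "msort d (P ! j) = (outp j, cp j, op j)" by (simp add: outp_def cp_def op_def)
      ultimately show ?thesis using "1.IH"[OF _ mem 1(2)] by (simp add: K_def)
    qed
    obtain outm cm opm where KM: "kmerge d (map outp [0..<K]) = (outm, cm, opm)"
      by (metis prod_cases3)
    have ms: "msort d xs = (outm, (\<Sum>j<K. cp j) + cm, 1 + n + (\<Sum>j<K. op j) + opm)"
    proof -
      have "map (msort d) P = map (\<lambda>j. (outp j, cp j, op j)) [0..<K]"
        using lenP by (intro nth_equalityI) (auto simp: outp_def cp_def op_def)
      then show ?thesis using KM msort_merge[OF n2[unfolded n_def] 1(2)]
        by (simp add: P_def K_def n_def sum_list_sum_nth atLeast0LessThan o_def)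
    qed
    have "n = sum_list (map length P)" using catP by (metis n_def length_concat)
    then have sizes: "(\<Sum>j<K. length (P ! j)) = n"
      using lenP by (simp add: sum_list_sum_nth atLeast0LessThan)
    have "set P = (\<lambda>j. P ! j) ` {..<K}" using lenP by (auto simp: set_conv_nth)
    then have setx: "set xs = (\<Union>j<K. set (P ! j))" using catP by auto
    have KC: "set (map fst outm) = (\<Union>j<K. fst ` set (outp j)) \<and> lcp_chain_from [] outm
        \<and> length outm = (\<Sum>j<K. length (outp j)) \<and> opm = K - 1 + (\<Sum>j<K. length (outp j)) * (d + 1)
        \<and> cm + (\<Sum>j<K. L_H (outp j)) + (if (\<Sum>j<K. length (outp j)) = 0 then 0 else 1)
           \<le> L_H outm + d * (\<Sum>j<K. length (outp j)) + (\<Sum>j<K. if outp j = [] then 0 else 1)"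
    proof -
      have "\<forall>j<K. \<forall>k<K. j \<noteq> k \<longrightarrow> fst ` set (outp j) \<inter> fst ` set (outp k) = {}"
        using distinct_concat_nth[of P] 1(3) catP lenP IH by (metis list.set_map)
      then show ?thesis using kmerge_correct[of "map outp [0..<K]" d] KM IH
        by (simp add: K_def)
    qed
    have out_sizes: "(\<Sum>j<K. length (outp j)) = n" using IH sizes by simp
    show ?thesis
    proof (intro conjI allI impI)
      show "set (map fst out) = set xs" "length out = length xs" "lcp_chain_from [] out"
        using KC 1(4) ms IH out_sizes by (auto simp: setx n_def)
    next
      fix k assume nk: "length xs \<le> (2^d)^k"
      then obtain k' where k: "k = Suc k'" using n2 by (cases k) (auto simp: n_def)
      have "length (P ! j) \<le> K ^ k'" if "j < K" for j
        using psize_le_pow[OF K1, of n k'] nk k that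
        by (simp add: P_def length_split_parts_nth K_def n_def)
      then have parts: "\<forall>j<K. cp j + (if length (P ! j) = 0 then 0 else 1)
            \<le> L_H (outp j) + d * length (P ! j) * k' + length (P ! j)"
          "\<forall>j<K. op j \<le> (d + K + 2) * length (P ! j) * k' + 1"
        using IH by auto
      have merge_c: "cm + (\<Sum>j<K. L_H (outp j)) + 1
          \<le> L_H outm + d * n + (\<Sum>j<K. if length (P ! j) = 0 then 0 else 1)"
      proof -
        have "(\<Sum>j<K. if outp j = [] then 0 else 1) = (\<Sum>j<K. if length (P ! j) = 0 then 0 else (1::nat))"
          using IH by (intro sum.cong refl) (metis length_0_conv lessThan_iff)
        then show ?thesis using KC out_sizes n2 by simp
      qed
      note level = merge_level_bound[OF parts merge_c _ sizes n2 K1]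
      show "c + (if xs = [] then 0 else 1) \<le> L_H out + d * length xs * k + length xs"
        "ops \<le> (d + 2^d + 2) * length xs * k + 1"
        using level KC out_sizes 1(4) ms n2 k by (auto simp: n_def K_def)
    qed
  qed
qed

lemma le_pow_ceiling_log:
  fixes K n :: nat
  assumes "K \<ge> 2" "n \<ge> 1"
  shows "n \<le> K ^ nat \<lceil>log (real K) (real n)\<rceil>"
proof -
  let ?r = "log (real K) (real n)"
  have "real n = real K powr ?r" using assms by simp
  also have "\<dots> \<le> real K powr real (nat \<lceil>?r\<rceil>)"
    using assms by (intro powr_mono) (auto simp: le_nat_iff)
  also have "\<dots> = real K ^ nat \<lceil>?r\<rceil>" by (rule powr_realpow) (use assms in simp)
  finally show ?thesis by (metis of_nat_le_iff of_nat_power)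
qed

lemma msort_comparison_bound:
  fixes xs :: "'a::linorder list list"
  assumes d: "d \<ge> 1" and xs: "distinct xs" "xs \<noteq> []"
  defines "n \<equiv> length xs" and "K \<equiv> (2::nat) ^ d" and "out \<equiv> fst (msort d xs)"
  shows "sorts_with_lcp (set xs) out \<and>
    real (msort_comparisons d xs)
      < real (L_H out) + real n * real_of_int \<lceil>log (real K) (real n)\<rceil> * log 2 (real K)
        + real n + real_of_int \<lceil>(real n - 1) / (real K - 1)\<rceil>"
proof
  define k where "k = nat \<lceil>log (real K) (real n)\<rceil>"
  have n1: "n \<ge> 1" and K2: "K \<ge> 2" using xs d by (auto simp: n_def K_def Suc_le_eq self_le_power)
  have props: "set (map fst out) = set xs" "lcp_chain_from [] out"
    "msort_comparisons d xs + 1 \<le> L_H out + d * n * k + n"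
  proof -
    have "msort d xs = (fst (msort d xs), fst (snd (msort d xs)), snd (snd (msort d xs)))" by simp
    from msort_correct_and_cost[OF d xs(1) this] le_pow_ceiling_log[OF K2 n1] xs(2)
    show "set (map fst out) = set xs" "lcp_chain_from [] out"
      "msort_comparisons d xs + 1 \<le> L_H out + d * n * k + n"
      by (auto simp: out_def msort_comparisons_def n_def K_def k_def)
  qed
  then show "sorts_with_lcp (set xs) out" using lcp_chain_from_sorts by blast
  have "real_of_int \<lceil>log (real K) (real n)\<rceil> = real k" using K2 n1 by (simp add: k_def)
  moreover have "log 2 (real K) = real d" by (simp add: K_def)
  ultimately have depth: "real n * real_of_int \<lceil>log (real K) (real n)\<rceil> * log 2 (real K)
      = real d * real n * real k" by simp
  have "real_of_int \<lceil>(real n - 1) / (real K - 1)\<rceil> \<ge> 0"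
  proof -
    have "(real n - 1) / (real K - 1) \<ge> 0" using n1 K2 by simp
    then show ?thesis using le_of_int_ceiling[of "(real n - 1) / (real K - 1)"] by linarith
  qed
  moreover have "real (msort_comparisons d xs) + 1 \<le> real (L_H out) + real d * real n * real k + real n"
    using props(3) by (metis of_nat_add of_nat_le_iff of_nat_mult of_nat_1)
  ultimately show "real (msort_comparisons d xs)
      < real (L_H out) + real n * real_of_int \<lceil>log (real K) (real n)\<rceil> * log 2 (real K)
        + real n + real_of_int \<lceil>(real n - 1) / (real K - 1)\<rceil>"
    using depth by linarith
qed

text \<open>Running time O(D + n log n): with k = ceil(log_2 n) \<ge> ceil(log_K n) the number of
operations is at most L(H) + (2d + K + 2)*n*k + n + 1, and L(H) \<le> D.\<close>
lemma msort_time_bound: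
  assumes d: "d \<ge> 1"
  shows "\<exists>C :: real. \<forall>xs :: 'a::linorder list list. distinct xs \<and> length xs \<ge> 2 \<longrightarrow>
            real (msort_time d xs)
              \<le> C * (real (dist_prefix_size (set xs)) + real (length xs) * log 2 (real (length xs)))"
proof (intro exI allI impI)
  fix xs :: "'a list list"
  assume xs: "distinct xs \<and> length xs \<ge> 2"
  define n where "n = length xs"
  define K where "K = (2::nat) ^ d"
  define out where "out = fst (msort d xs)"
  define D where "D = dist_prefix_size (set xs)"
  define k where "k = nat \<lceil>log 2 (real n)\<rceil>"
  define N where "N = real n * log 2 (real n)"
  have n2: "n \<ge> 2" using xs by (simp add: n_def)
  have "n \<le> 2 ^ k" unfolding k_def using le_pow_ceiling_log[of 2 n] n2 by simp
  also have "(2::nat) ^ k \<le> K ^ k" using d by (simp add: K_def power_mono self_le_power)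
  finally have nk: "n \<le> K ^ k" .
  have "msort d xs = (fst (msort d xs), fst (snd (msort d xs)), snd (snd (msort d xs)))" by simp
  moreover have "xs \<noteq> []" using n2 by (auto simp: n_def)
  ultimately have spec: "set (map fst out) = set xs \<and> lcp_chain_from [] out \<and>
      fst (snd (msort d xs)) + 1 \<le> L_H out + d * n * k + n \<and>
      snd (snd (msort d xs)) \<le> (d + K + 2) * n * k + 1"
    using msort_correct_and_cost[OF d] nk xs unfolding out_def n_def K_def by fastforce
  then
  have props: "set (map fst out) = set xs" "lcp_chain_from [] out"
    "fst (snd (msort d xs)) + 1 \<le> L_H out + d * n * k + n"
    "snd (snd (msort d xs)) \<le> (d + K + 2) * n * k + 1"
    by auto
  have "L_H out \<le> D" unfolding D_def using L_H_le_dist_prefix_size[OF props(2,1)] .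
  then have "msort_time d xs \<le> D + (2 * d + K + 2) * (n * k) + n + 1"
    using props(3,4) unfolding msort_time_def by (simp add: algebra_simps)
  then have time: "real (msort_time d xs)
      \<le> real D + (2 * real d + real K + 2) * (real n * real k) + real n + 1"
    by (metis (mono_tags, lifting) of_nat_1 of_nat_add of_nat_le_iff of_nat_mult of_nat_numeral)
  have lg: "log 2 (real n) \<ge> 1" using n2 by simp
  have "real k = real_of_int \<lceil>log 2 (real n)\<rceil>" using lg by (simp add: k_def)
  then have "real k \<le> 2 * log 2 (real n)" using ceiling_correct[of "log 2 (real n)"] lg by linarith
  then have "real n * real k \<le> real n * (2 * log 2 (real n))" by (intro mult_left_mono) auto
  then have "(2 * real d + real K + 2) * (real n * real k) \<le> (2 * real d + real K + 2) * (2 * N)"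
    by (intro mult_left_mono) (auto simp: N_def)
  moreover have "real n + 1 \<le> 2 * N"
  proof -
    have "real n \<le> N" using lg by (simp add: N_def mult_le_cancel_left1)
    then show ?thesis using n2 by linarith
  qed
  ultimately have "real (msort_time d xs) \<le> real D + (4 * real d + 2 * real K + 6) * N"
    using time by (simp add: algebra_simps)
  also have "\<dots> \<le> (4 * real d + 2 * real K + 6) * (real D + N)"
    by (simp add: algebra_simps)
  finally have "real (msort_time d xs) \<le> (4 * real d + 2 * real K + 6) * (real D + N)" .
  then show "real (msort_time d xs)
      \<le> (4 * real d + 2 * real ((2::nat) ^ d) + 6)
         * (real (dist_prefix_size (set xs)) + real (length xs) * log 2 (real (length xs)))"
    by (simp add: D_def N_def n_def K_def)
qed

theorem mainTheorem5:
  fixes d :: nat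
  assumes "d \<ge> 1"
  shows "(\<forall>xs :: 'a::linorder list list. distinct xs \<and> xs \<noteq> [] \<longrightarrow>
            (let n = length xs; K = (2::nat) ^ d; out = fst (msort d xs) in
             sorts_with_lcp (set xs) out \<and>
             real (msort_comparisons d xs)
               < real (L_H out)
                 + real n * real_of_int \<lceil>log (real K) (real n)\<rceil> * log 2 (real K)
                 + real n + real_of_int \<lceil>(real n - 1) / (real K - 1)\<rceil>))
       \<and> (\<exists>C :: real. \<forall>xs :: 'a list list. distinct xs \<and> length xs \<ge> 2 \<longrightarrow>
            real (msort_time d xs)
              \<le> C * (real (dist_prefix_size (set xs)) + real (length xs) * log 2 (real (length xs))))"
  using msort_comparison_bound[OF assms] msort_time_bound[OF assms] unfolding Let_def by blast

end
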